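(* Let $G$ be a finite group with $|G'|=2$, and let $g\in G$ with $\mathrm{ord}(g)=n$. (1) $g\sim g^{[n+1]}$, and hence $[g^{[n]}]$ is an idempotent of $\mathcal C(\mathcal B(G),\mathcal F(G))$. (2) If $k\in[1,n]$ is odd and $g^k\notin\mathsf Z(G)$, then $g^{[k]}\sim g^k$ (where $g^k$ denotes the one-term sequence consisting of the group element $g^k$). (3) If $g,h\in G\setminus\mathsf Z(G)$ with $gh=hg$, then $g\boldsymbol{\cdot}h\not\sim gh$ provided that either (a) $gh\in\mathsf Z(G)$, or (b) there is $g_0\in G$ with $g_0g\neq gg_0$ and $g_0h\neq hg_0$.
   Context: Let $G$ be a finite group written multiplicatively with identity $1_G$; $G'$ is its commutator subgroup and $\mathsf Z(G)$ its center. $\mathcal F(G)$ is the free abelian monoid with basis $G$; its elements are sequences $S=g_1\boldsymbol{\cdot}\ldots\boldsymbol{\cdot}g_\ell$ (operation $\boldsymbol{\cdot}$ = concatenation; $g^{[k]}$ denotes the sequence of $k$ copies of $g$; a group element is also viewed as a one-term sequence). $\pi(S)=\{g_{\tau(1)}\cdots g_{\tau(\ell)}:\tau\text{ a permutation of }[1,\ell]\}$, $\pi$ of the empty sequence is $\{1_G\}$, and $\mathcal B(G)=\{S\in\mathcal F(G):1_G\in\pi(S)\}$. For $S,S'\in\mathcal F(G)$, $S\sim S'$ means: for all $T\in\mathcal F(G)$, $S\boldsymbol{\cdot}T\in\mathcal B(G)\iff S'\boldsymbol{\cdot}T\in\mathcal B(G)$; this is a congruence, $[S]$ is the class of $S$,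 and $\mathcal C(\mathcal B(G),\mathcal F(G))$ is the set of classes, an additively written commutative semigroup with $[S]+[T]=[S\boldsymbol{\cdot}T]$. *)

theory Defs
  imports "HOL-Algebra.Algebra" "HOL-Library.Multiset"
begin

definition center :: "('a, 'b) monoid_scheme \<Rightarrow> 'a set" where
  "center G = {z \<in> carrier G. \<forall>x \<in> carrier G. z \<otimes>\<^bsub>G\<^esub> x = x \<otimes>\<^bsub>G\<^esub> z}"

text \<open>Sequences over G are finite multisets with support in carrier G (the free abelian monoid F(G)).\<close>
definition seqs :: "('a, 'b) monoid_scheme \<Rightarrow> 'a multiset set" where
  "seqs G = {S. set_mset S \<subseteq> carrier G}"

definition seq_prods :: "('a, 'b) monoid_scheme \<Rightarrow> 'a multiset \<Rightarrow> 'a set" where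
  "seq_prods G S = {foldr (\<lambda>x y. x \<otimes>\<^bsub>G\<^esub> y) xs \<one>\<^bsub>G\<^esub> | xs. mset xs = S}"

definition prod_one_seqs :: "('a, 'b) monoid_scheme \<Rightarrow> 'a multiset set" where
  "prod_one_seqs G = {S \<in> seqs G. \<one>\<^bsub>G\<^esub> \<in> seq_prods G S}"

text \<open>The congruence S ~ S' defining C(B(G),F(G)).\<close>
definition seq_equiv :: "('a, 'b) monoid_scheme \<Rightarrow> 'a multiset \<Rightarrow> 'a multiset \<Rightarrow> bool" where
  "seq_equiv G S S' \<longleftrightarrow>
     (\<forall>T \<in> seqs G. (S + T \<in> prod_one_seqs G) \<longleftrightarrow> (S' + T \<in> prod_one_seqs G))"

end

theory Submission
  imports Defs
begin

text \<open>
  If \<open>G' = {1, c}\<close> has order two, then \<open>c\<close> is a central involution and any two elements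
  \<open>x, y\<close> satisfy \<open>xy = yx\<close> or \<open>xy = c yx\<close>. Consequently the ordered products of a sequence are
  a single element if its terms commute pairwise, and otherwise exactly \<open>{p, cp}\<close> for any one
  ordered product \<open>p\<close>. Membership in \<open>\<B>(G)\<close> thus depends only on the product and on whether the
  terms commute, so two sequences with equal product whose terms commute with the same
  elements are equivalent; this gives (1), and (2) because an odd power of \<open>g\<close> commutes with
  exactly the elements that commute with \<open>g\<close>. For (3), an element \<open>g\<^sub>0\<close> commuting with neither
  \<open>g\<close> nor \<open>h\<close> commutes with \<open>gh\<close>; completing by \<open>x = c (gh g\<^sub>0)\<^sup>-\<^sup>1\<close>, the sequence
  \<open>g \<cdot> h \<cdot> g\<^sub>0 \<cdot> x\<close> is product-one while \<open>gh \<cdot> g\<^sub>0 \<cdot> x\<close> commutes pairwise and has the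
  single product \<open>c \<noteq> 1\<close>.
\<close>

definition list_prod :: "('a, 'b) monoid_scheme \<Rightarrow> 'a list \<Rightarrow> 'a" where
  "list_prod G xs = foldr (\<lambda>x y. x \<otimes>\<^bsub>G\<^esub> y) xs \<one>\<^bsub>G\<^esub>"

definition pairwise_commute :: "('a, 'b) monoid_scheme \<Rightarrow> 'a set \<Rightarrow> bool" where
  "pairwise_commute G A \<longleftrightarrow> (\<forall>x\<in>A. \<forall>y\<in>A. x \<otimes>\<^bsub>G\<^esub> y = y \<otimes>\<^bsub>G\<^esub> x)"

lemma seq_prods_eq_list_prods: "seq_prods G S = {list_prod G xs | xs. mset xs = S}"
  unfolding seq_prods_def list_prod_def by simp

lemma pairwise_commute_insert:
  "pairwise_commute G (insert a A) \<longleftrightarrow> pairwise_commute G A \<and> (\<forall>t\<in>A. t \<otimes>\<^bsub>G\<^esub> a = a \<otimes>\<^bsub>G\<^esub> t)"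
  unfolding pairwise_commute_def by auto

lemma pairwise_commute_subset: "pairwise_commute G B \<Longrightarrow> A \<subseteq> B \<Longrightarrow> pairwise_commute G A"
  unfolding pairwise_commute_def by blast

lemma exists_mset_Cons_Cons:
  assumes "x \<in> set xs" "y \<in> set xs" "x \<noteq> y"
  shows "\<exists>R. mset (x # y # R) = mset xs"
proof -
  have "y \<in> set (remove1 x xs)"
    using assms by (simp add: in_set_remove1)
  then have "mset (remove1 x xs) = add_mset y (mset (remove1 y (remove1 x xs)))"
    by (metis insert_DiffM mset_remove1 set_mset_mset)
  moreover have "mset xs = add_mset x (mset (remove1 x xs))"
    using assms(1) by (simp add: insert_DiffM)
  ultimately have "mset (x # y # remove1 y (remove1 x xs)) = mset xs"
    by (simp only: mset.simps)
  then show ?thesis ..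
qed

context monoid
begin

lemma list_prod_Nil [simp]: "list_prod G [] = \<one>"
  by (simp add: list_prod_def)

lemma list_prod_Cons [simp]: "list_prod G (x # xs) = x \<otimes> list_prod G xs"
  by (simp add: list_prod_def)

lemma list_prod_closed [simp]: "set xs \<subseteq> carrier G \<Longrightarrow> list_prod G xs \<in> carrier G"
  by (induction xs) auto

lemma list_prod_append:
  "set xs \<subseteq> carrier G \<Longrightarrow> set ys \<subseteq> carrier G \<Longrightarrow>
   list_prod G (xs @ ys) = list_prod G xs \<otimes> list_prod G ys"
  by (induction xs) (auto simp: m_assoc)

lemma list_prod_replicate: "x \<in> carrier G \<Longrightarrow> list_prod G (replicate n x) = x [^] n"
  by (induction n) (auto intro: group_commutes_pow[symmetric])

lemma commute_mult:
  assumes "a \<in> carrier G" "b \<in> carrier G" "y \<in> carrier G"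
    and "y \<otimes> a = a \<otimes> y" "y \<otimes> b = b \<otimes> y"
  shows "y \<otimes> (a \<otimes> b) = (a \<otimes> b) \<otimes> y"
proof -
  have "y \<otimes> (a \<otimes> b) = (y \<otimes> a) \<otimes> b"
    using assms(1-3) by (simp add: m_assoc)
  also have "\<dots> = a \<otimes> (y \<otimes> b)"
    using assms(1-4) by (simp add: m_assoc)
  also have "\<dots> = (a \<otimes> b) \<otimes> y"
    using assms(1-3,5) by (simp add: m_assoc)
  finally show ?thesis .
qed

lemma commute_list_prod:
  assumes "x \<in> carrier G" "set ys \<subseteq> carrier G" "\<forall>y\<in>set ys. x \<otimes> y = y \<otimes> x"
  shows "x \<otimes> list_prod G ys = list_prod G ys \<otimes> x"
  using assms by (induction ys) (auto intro: commute_mult)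

lemma list_prod_perm_of_pairwise_commute:
  assumes "set xs \<subseteq> carrier G" "pairwise_commute G (set xs)" "mset ys = mset xs"
  shows "list_prod G ys = list_prod G xs"
  using assms
proof (induction xs arbitrary: ys)
  case Nil
  then show ?case by simp
next
  case (Cons x xs)
  have "x \<in> set ys"
    using Cons.prems(3) by (metis list.set_intros(1) set_mset_mset)
  then obtain ys1 ys2 where ys: "ys = ys1 @ x # ys2"
    by (meson split_list)
  have set_ys: "set ys = set (x # xs)"
    using Cons.prems(3) by (metis set_mset_mset)
  have carr: "x \<in> carrier G" "set ys1 \<subseteq> carrier G" "set ys2 \<subseteq> carrier G"
    using Cons.prems(1) set_ys ys by auto
  have rest: "list_prod G (ys1 @ ys2) = list_prod G xs"
    using Cons.IH[of "ys1 @ ys2"] Cons.prems ys by (auto intro: pairwise_commute_subset)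
  have "set ys1 \<subseteq> set (x # xs)"
    using set_ys ys by auto
  then have "\<forall>y\<in>set ys1. x \<otimes> y = y \<otimes> x"
    using Cons.prems(2) unfolding pairwise_commute_def by (meson list.set_intros(1) subsetD)
  then have "list_prod G ys1 \<otimes> x = x \<otimes> list_prod G ys1"
    using commute_list_prod[OF carr(1,2)] by simp
  with rest[symmetric] carr ys show ?case
    by (simp add: list_prod_append m_assoc[symmetric])
qed

end

context group
begin

lemma commute_inv:
  assumes "a \<in> carrier G" "y \<in> carrier G" "y \<otimes> a = a \<otimes> y"
  shows "y \<otimes> inv a = inv a \<otimes> y"
proof -
  have "y \<otimes> inv a = inv a \<otimes> ((a \<otimes> y) \<otimes> inv a)"
    using assms(1,2) by (simp add: m_assoc[symmetric])
  also have "\<dots> = inv a \<otimes> ((y \<otimes> a) \<otimes> inv a)"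
    using assms(3) by simp
  also have "\<dots> = inv a \<otimes> y"
    using assms(1,2) by (simp add: m_assoc)
  finally show ?thesis .
qed

lemma mult_eq_of_commutator_eq:
  assumes "x \<in> carrier G" "y \<in> carrier G" "x \<otimes> y \<otimes> inv x \<otimes> inv y = d"
  shows "x \<otimes> y = d \<otimes> (y \<otimes> x)"
proof -
  have "d \<otimes> (y \<otimes> x) = x \<otimes> (y \<otimes> (inv x \<otimes> (inv y \<otimes> (y \<otimes> x))))"
    using assms(1,2) assms(3)[symmetric] by (simp add: m_assoc)
  also have "inv y \<otimes> (y \<otimes> x) = x"
    using assms(1,2) by (simp add: m_assoc[symmetric])
  finally show ?thesis
    using assms(1,2) by (simp add: m_assoc[symmetric])
qed

end

locale central_commutator_group = group G for G (structure) +
  fixes c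
  assumes c_closed [simp]: "c \<in> carrier G"
    and c_neq_one: "c \<noteq> \<one>"
    and c_mult_self: "c \<otimes> c = \<one>"
    and c_central: "x \<in> carrier G \<Longrightarrow> c \<otimes> x = x \<otimes> c"
    and commute_or_c_commute:
      "x \<in> carrier G \<Longrightarrow> y \<in> carrier G \<Longrightarrow> x \<otimes> y = y \<otimes> x \<or> x \<otimes> y = c \<otimes> (y \<otimes> x)"
begin

lemma c_left_commute: "a \<in> carrier G \<Longrightarrow> b \<in> carrier G \<Longrightarrow> a \<otimes> (c \<otimes> b) = c \<otimes> (a \<otimes> b)"
  using c_central[of b] c_central[of "a \<otimes> b"] by (simp add: m_assoc)

lemma c_c_cancel: "a \<in> carrier G \<Longrightarrow> c \<otimes> (c \<otimes> a) = a"
  by (simp add: c_mult_self m_assoc[symmetric])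

lemma c_mult_eq_one_iff: "a \<in> carrier G \<Longrightarrow> c \<otimes> a = \<one> \<longleftrightarrow> a = c"
  using c_c_cancel[of a] by (auto simp: c_mult_self)

lemma c_commute_if_not_commute:
  "x \<in> carrier G \<Longrightarrow> y \<in> carrier G \<Longrightarrow> x \<otimes> y \<noteq> y \<otimes> x \<Longrightarrow> x \<otimes> y = c \<otimes> (y \<otimes> x)"
  using commute_or_c_commute by blast

lemma list_prod_perm:
  assumes "set xs \<subseteq> carrier G" "mset ys = mset xs"
  shows "list_prod G ys = list_prod G xs \<or> list_prod G ys = c \<otimes> list_prod G xs"
  using assms
proof (induction xs arbitrary: ys)
  case Nil
  then show ?case by simp
next
  case (Cons x xs)
  have "x \<in> set ys"
    using Cons.prems(2) by (metis list.set_intros(1) set_mset_mset)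
  then obtain ys1 ys2 where ys: "ys = ys1 @ x # ys2"
    by (meson split_list)
  have "set ys = set (x # xs)"
    using Cons.prems(2) by (metis set_mset_mset)
  then have carr: "x \<in> carrier G" "set ys1 \<subseteq> carrier G" "set ys2 \<subseteq> carrier G"
    using Cons.prems(1) ys by auto
  define A B where "A = list_prod G ys1" and "B = list_prod G ys2"
  have AB: "A \<in> carrier G" "B \<in> carrier G" "list_prod G xs \<in> carrier G"
    using carr Cons.prems(1) by (auto simp: A_def B_def)
  have "A \<otimes> B = list_prod G xs \<or> A \<otimes> B = c \<otimes> list_prod G xs"
    using Cons.IH[of "ys1 @ ys2"] Cons.prems ys carr by (simp add: list_prod_append A_def B_def)
  moreover have "list_prod G ys = x \<otimes> (A \<otimes> B) \<or> list_prod G ys = c \<otimes> (x \<otimes> (A \<otimes> B))"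
    using commute_or_c_commute[OF AB(1) carr(1)] carr AB ys
    by (auto simp: list_prod_append A_def B_def m_assoc[symmetric])
  ultimately show ?case
    using c_left_commute[OF carr(1) AB(3)] c_c_cancel carr AB by auto
qed

lemma seq_prods_mset:
  assumes "set xs \<subseteq> carrier G"
  shows "seq_prods G (mset xs) =
    (if pairwise_commute G (set xs) then {list_prod G xs} else {list_prod G xs, c \<otimes> list_prod G xs})"
proof -
  have sub: "seq_prods G (mset xs) \<subseteq> {list_prod G xs, c \<otimes> list_prod G xs}"
    using list_prod_perm[OF assms] by (auto simp: seq_prods_eq_list_prods)
  have xs_in: "list_prod G xs \<in> seq_prods G (mset xs)"
    by (auto simp: seq_prods_eq_list_prods)
  show ?thesis
  proof (cases "pairwise_commute G (set xs)")
    case True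
    have "p = list_prod G xs" if p: "p \<in> seq_prods G (mset xs)" for p
    proof -
      obtain ys where ys: "mset ys = mset xs" "p = list_prod G ys"
        using p unfolding seq_prods_eq_list_prods by blast
      from list_prod_perm_of_pairwise_commute[OF assms True ys(1)] ys(2) show ?thesis
        by simp
    qed
    with xs_in have "seq_prods G (mset xs) = {list_prod G xs}"
      by blast
    with True show ?thesis
      by simp
  next
    case False
    then obtain x y where xy: "x \<in> set xs" "y \<in> set xs" "x \<otimes> y \<noteq> y \<otimes> x"
      by (auto simp: pairwise_commute_def)
    have "x \<noteq> y"
      using xy(3) by auto
    then obtain R where R: "mset (x # y # R) = mset xs"
      using exists_mset_Cons_Cons[OF xy(1,2)] by blast
    moreover have "mset (y # x # R) = mset (x # y # R)"
      by (simp only: mset.simps add_mset_commute)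
    ultimately have "mset (y # x # R) = mset xs"
      by simp
    with R have in_prods: "list_prod G (x # y # R) \<in> seq_prods G (mset xs)"
      "list_prod G (y # x # R) \<in> seq_prods G (mset xs)"
      unfolding seq_prods_eq_list_prods by blast+
    have "set (x # y # R) = set xs"
      using R by (metis set_mset_mset)
    then have "set R \<subseteq> carrier G"
      using assms by auto
    then have carr: "x \<in> carrier G" "y \<in> carrier G" "list_prod G R \<in> carrier G"
      using xy assms by auto
    have "list_prod G (x # y # R) \<noteq> list_prod G (y # x # R)"
      using xy(3) carr by (simp add: m_assoc[symmetric])
    moreover have "list_prod G (x # y # R) \<in> {list_prod G xs, c \<otimes> list_prod G xs}"
      "list_prod G (y # x # R) \<in> {list_prod G xs, c \<otimes> list_prod G xs}"
      using in_prods sub by (meson subsetD)+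
    ultimately have "{list_prod G xs, c \<otimes> list_prod G xs} \<subseteq> seq_prods G (mset xs)"
      using in_prods by auto
    with sub False show ?thesis
      by auto
  qed
qed

lemma mset_in_prod_one_seqs_iff:
  assumes "set xs \<subseteq> carrier G"
  shows "mset xs \<in> prod_one_seqs G \<longleftrightarrow>
    list_prod G xs = \<one> \<or> (\<not> pairwise_commute G (set xs) \<and> list_prod G xs = c)"
proof -
  have "mset xs \<in> prod_one_seqs G \<longleftrightarrow> \<one> \<in> seq_prods G (mset xs)"
    using assms by (simp add: prod_one_seqs_def seqs_def)
  also have "\<dots> \<longleftrightarrow> list_prod G xs = \<one> \<or> (\<not> pairwise_commute G (set xs) \<and> list_prod G xs = c)"
  proof (cases "pairwise_commute G (set xs)")
    case False
    have "\<one> = c \<otimes> list_prod G xs \<longleftrightarrow> list_prod G xs = c"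
      using c_mult_eq_one_iff[of "list_prod G xs"] assms by (metis list_prod_closed)
    with False show ?thesis
      unfolding seq_prods_mset[OF assms] by auto
  qed (simp add: seq_prods_mset[OF assms] eq_commute)
  finally show ?thesis .
qed

lemma seq_equiv_msetI:
  assumes "set xs \<subseteq> carrier G" "set xs' \<subseteq> carrier G"
    and "list_prod G xs = list_prod G xs'"
    and "\<And>A. A \<subseteq> carrier G \<Longrightarrow>
      pairwise_commute G (set xs \<union> A) \<longleftrightarrow> pairwise_commute G (set xs' \<union> A)"
  shows "seq_equiv G (mset xs) (mset xs')"
  unfolding seq_equiv_def
proof
  fix T
  assume "T \<in> seqs G"
  then obtain ts where ts: "T = mset ts" "set ts \<subseteq> carrier G"
    by (metis ex_mset seqs_def mem_Collect_eq set_mset_mset)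
  then have "mset xs + T = mset (xs @ ts)" "mset xs' + T = mset (xs' @ ts)"
    by auto
  moreover have "set (xs @ ts) \<subseteq> carrier G" "set (xs' @ ts) \<subseteq> carrier G"
    using assms(1,2) ts(2) by auto
  ultimately show "mset xs + T \<in> prod_one_seqs G \<longleftrightarrow> mset xs' + T \<in> prod_one_seqs G"
    using assms ts(2) by (simp only: mset_in_prod_one_seqs_iff) (simp add: list_prod_append)
qed

lemma seq_equiv_single_replicate_Suc_ord:
  assumes "finite (carrier G)" "g \<in> carrier G"
  shows "seq_equiv G {#g#} (replicate_mset (ord g + 1) g)"
proof -
  have "ord g \<noteq> 0"
    using ord_ge_1[OF assms] by simp
  then have "seq_equiv G (mset [g]) (mset (replicate (ord g + 1) g))"
    using assms by (intro seq_equiv_msetI) (auto simp: list_prod_replicate)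
  then show ?thesis
    by simp
qed

lemma seq_equiv_replicate_ord_idem:
  assumes "finite (carrier G)" "g \<in> carrier G"
  shows "seq_equiv G (replicate_mset (ord g) g + replicate_mset (ord g) g) (replicate_mset (ord g) g)"
proof -
  have "ord g \<noteq> 0"
    using ord_ge_1[OF assms] by simp
  then have "seq_equiv G (mset (replicate (ord g) g @ replicate (ord g) g)) (mset (replicate (ord g) g))"
    using assms by (intro seq_equiv_msetI) (auto simp: list_prod_append list_prod_replicate)
  then show ?thesis
    by simp
qed

lemma c_pow_odd: "odd k \<Longrightarrow> c [^] (k::nat) = c"
  by (metis c_mult_self c_closed nat_pow_Suc nat_pow_one nat_pow_pow numeral_2_eq_2 oddE l_one
      nat_pow_0 Suc_eq_plus1)

lemma c_commute_pow:
  assumes "t \<in> carrier G" "g \<in> carrier G" "t \<otimes> g = c \<otimes> (g \<otimes> t)"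
  shows "t \<otimes> g [^] (k::nat) = c [^] k \<otimes> (g [^] k \<otimes> t)"
proof (induction k)
  case 0
  then show ?case using assms by simp
next
  case (Suc k)
  have "t \<otimes> g [^] Suc k = (c [^] k \<otimes> (g [^] k \<otimes> t)) \<otimes> g"
    using assms Suc by (simp add: m_assoc[symmetric])
  also have "\<dots> = c [^] k \<otimes> (g [^] k \<otimes> (c \<otimes> (g \<otimes> t)))"
    using assms by (simp add: m_assoc)
  also have "\<dots> = c [^] Suc k \<otimes> (g [^] Suc k \<otimes> t)"
    using assms c_left_commute[of "g [^] k" "g \<otimes> t"] by (simp add: m_assoc)
  finally show ?case .
qed

lemma commute_pow_odd_iff:
  assumes "t \<in> carrier G" "g \<in> carrier G" "odd k"
  shows "t \<otimes> g [^] (k::nat) = g [^] k \<otimes> t \<longleftrightarrow> t \<otimes> g = g \<otimes> t"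
proof
  assume "t \<otimes> g = g \<otimes> t"
  then show "t \<otimes> g [^] k = g [^] k \<otimes> t"
    using group_commutes_pow[of g t k] assms by simp
next
  assume commute_pow: "t \<otimes> g [^] k = g [^] k \<otimes> t"
  show "t \<otimes> g = g \<otimes> t"
  proof (rule ccontr)
    assume "t \<otimes> g \<noteq> g \<otimes> t"
    then have "t \<otimes> g [^] k = c \<otimes> (g [^] k \<otimes> t)"
      using c_commute_pow c_commute_if_not_commute c_pow_odd assms by simp
    with commute_pow show False
      using c_neq_one assms by simp
  qed
qed

lemma seq_equiv_replicate_odd_single:
  assumes "g \<in> carrier G" "odd k"
  shows "seq_equiv G (replicate_mset k g) {#g [^] (k::nat)#}"
proof -
  have "k \<noteq> 0"
    using assms(2) by (cases k) auto
  then have "seq_equiv G (mset (replicate k g)) (mset [g [^] k])"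
    using assms commute_pow_odd_iff[OF _ assms]
    by (intro seq_equiv_msetI) (auto simp: list_prod_replicate pairwise_commute_insert)
  then show ?thesis
    by simp
qed

lemma commute_mult_of_not_commute:
  assumes "g \<in> carrier G" "h \<in> carrier G" "g0 \<in> carrier G"
    and "g0 \<otimes> g \<noteq> g \<otimes> g0" "g0 \<otimes> h \<noteq> h \<otimes> g0"
  shows "g0 \<otimes> (g \<otimes> h) = (g \<otimes> h) \<otimes> g0"
proof -
  have "g0 \<otimes> (g \<otimes> h) = c \<otimes> (g \<otimes> (g0 \<otimes> h))"
    using assms(1-3) c_commute_if_not_commute[OF assms(3,1,4)] by (simp add: m_assoc[symmetric])
  also have "\<dots> = c \<otimes> (c \<otimes> (g \<otimes> (h \<otimes> g0)))"
    using assms(1-3) c_commute_if_not_commute[OF assms(3,2,5)] c_left_commute[of g "h \<otimes> g0"] by simp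
  also have "\<dots> = (g \<otimes> h) \<otimes> g0"
    using assms(1-3) c_c_cancel by (simp add: m_assoc)
  finally show ?thesis .
qed

lemma not_commute_of_central_mult:
  assumes "g \<in> carrier G" "h \<in> carrier G" "g0 \<in> carrier G"
    and "g0 \<otimes> g \<noteq> g \<otimes> g0" "g0 \<otimes> (g \<otimes> h) = (g \<otimes> h) \<otimes> g0"
  shows "g0 \<otimes> h \<noteq> h \<otimes> g0"
proof
  assume commute: "g0 \<otimes> h = h \<otimes> g0"
  have "g0 \<otimes> (g \<otimes> h) = c \<otimes> (g \<otimes> (g0 \<otimes> h))"
    using assms(1-4) c_commute_if_not_commute[of g0 g] by (simp add: m_assoc[symmetric])
  also have "\<dots> = c \<otimes> ((g \<otimes> h) \<otimes> g0)"
    using assms(1-3) commute by (simp add: m_assoc)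
  finally have "c \<otimes> ((g \<otimes> h) \<otimes> g0) = (g \<otimes> h) \<otimes> g0"
    using assms(5) by simp
  then show False
    using c_neq_one assms(1-3) by simp
qed

lemma exists_not_commute_of_central_mult:
  assumes "g \<in> carrier G - center G" "h \<in> carrier G" "g \<otimes> h \<in> center G"
  shows "\<exists>g0 \<in> carrier G. g0 \<otimes> g \<noteq> g \<otimes> g0 \<and> g0 \<otimes> h \<noteq> h \<otimes> g0"
proof -
  obtain g0 where g0: "g0 \<in> carrier G" "g0 \<otimes> g \<noteq> g \<otimes> g0"
    using assms(1) unfolding center_def by auto
  moreover have "g0 \<otimes> (g \<otimes> h) = (g \<otimes> h) \<otimes> g0"
    using assms(3) g0(1) unfolding center_def by auto
  ultimately have "g0 \<otimes> h \<noteq> h \<otimes> g0"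
    using not_commute_of_central_mult assms(1,2) by blast
  with g0 show ?thesis
    by blast
qed

lemma commute_c_mult_inv:
  assumes "a \<in> carrier G" "y \<in> carrier G" "y \<otimes> a = a \<otimes> y"
  shows "y \<otimes> (c \<otimes> inv a) = (c \<otimes> inv a) \<otimes> y"
proof -
  have "y \<otimes> (c \<otimes> inv a) = c \<otimes> (y \<otimes> inv a)"
    using assms(1,2) c_left_commute[of y "inv a"] by simp
  also have "\<dots> = (c \<otimes> inv a) \<otimes> y"
    using commute_inv[OF assms] assms(1,2) by (simp add: m_assoc)
  finally show ?thesis .
qed

lemma not_seq_equiv_pair_single:
  assumes "g \<in> carrier G" "h \<in> carrier G" "g0 \<in> carrier G"
    and "g0 \<otimes> g \<noteq> g \<otimes> g0" "g0 \<otimes> h \<noteq> h \<otimes> g0"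
  shows "\<not> seq_equiv G {#g, h#} {#g \<otimes> h#}"
proof
  assume equiv: "seq_equiv G {#g, h#} {#g \<otimes> h#}"
  define u where "u = g \<otimes> h"
  define x where "x = c \<otimes> inv (u \<otimes> g0)"
  have carr: "u \<in> carrier G" "x \<in> carrier G"
    using assms(1-3) by (simp_all add: u_def x_def)
  have u_g0: "g0 \<otimes> u = u \<otimes> g0"
    unfolding u_def using commute_mult_of_not_commute[OF assms] .
  have prod: "u \<otimes> (g0 \<otimes> x) = c"
    using carr(1) assms(3) c_left_commute[of "u \<otimes> g0" "inv (u \<otimes> g0)"]
    by (simp add: x_def m_assoc[symmetric])
  have x_commute: "y \<otimes> x = x \<otimes> y" if y: "y \<in> carrier G" "y \<otimes> u = u \<otimes> y" "y \<otimes> g0 = g0 \<otimes> y" for y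
    unfolding x_def using commute_c_mult_inv commute_mult[OF carr(1) assms(3) y] carr(1) assms(3) y(1)
    by simp
  have "\<not> pairwise_commute G (set [g, h, g0, x])"
    using assms(4) by (auto simp: pairwise_commute_def)
  moreover have "list_prod G [g, h, g0, x] = c"
    using prod assms(1-3) carr(2) by (simp add: u_def m_assoc)
  ultimately have left_in: "mset [g, h, g0, x] \<in> prod_one_seqs G"
    using mset_in_prod_one_seqs_iff[of "[g, h, g0, x]"] carr(2) assms(1-3) by simp
  have "pairwise_commute G (set [u, g0, x])"
    using x_commute[of u] x_commute[of g0] u_g0 carr assms(3) by (auto simp: pairwise_commute_def)
  then have right_notin: "mset [u, g0, x] \<notin> prod_one_seqs G"
    using mset_in_prod_one_seqs_iff[of "[u, g0, x]"] prod carr assms(3) c_neq_one by simp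
  have "mset [g0, x] \<in> seqs G"
    using assms(3) carr by (simp add: seqs_def)
  moreover have "{#g, h#} + mset [g0, x] = mset [g, h, g0, x]" "{#g \<otimes> h#} + mset [g0, x] = mset [u, g0, x]"
    by (simp_all add: u_def add_mset_commute)
  ultimately have "mset [g, h, g0, x] \<in> prod_one_seqs G \<longleftrightarrow> mset [u, g0, x] \<in> prod_one_seqs G"
    using equiv unfolding seq_equiv_def by metis
  with left_in right_notin show False
    by blast
qed

end

lemma (in group) card_derived_2E:
  assumes "card (derived G (carrier G)) = 2"
  obtains c where "derived G (carrier G) = {\<one>, c}" "c \<noteq> \<one>"
proof -
  have one: "\<one> \<in> derived G (carrier G)"
    by (simp add: derived_is_subgroup subgroup.one_closed)
  obtain a b where ab: "derived G (carrier G) = {a, b}" "a \<noteq> b"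
    using assms card_2_iff by metis
  show ?thesis
  proof (cases "a = \<one>")
    case True
    with ab that show ?thesis
      by blast
  next
    case False
    with one ab have "b = \<one>"
      by auto
    with ab False that show ?thesis
      by (metis insert_commute)
  qed
qed

lemma (in group) central_commutator_group_of_card_derived_2:
  assumes "card (derived G (carrier G)) = 2"
  obtains c where "central_commutator_group G c"
proof -
  define D where "D = derived G (carrier G)"
  obtain c where D: "D = {\<one>, c}" and c_neq_one: "c \<noteq> \<one>"
    using card_derived_2E[OF assms] unfolding D_def .
  have sub: "subgroup D G"
    unfolding D_def by (simp add: derived_is_subgroup)
  have c_in: "c \<in> D"
    using D by simp
  have c_closed: "c \<in> carrier G"
    using subgroup.mem_carrier[OF sub c_in] .
  have "c \<otimes> c \<in> D"
    using subgroup.m_closed[OF sub c_in c_in] .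
  moreover have "c \<otimes> c \<noteq> c"
    using c_closed c_neq_one by simp
  ultimately have c_mult_self: "c \<otimes> c = \<one>"
    using D by blast
  have c_central: "c \<otimes> x = x \<otimes> c" if x: "x \<in> carrier G" for x
  proof -
    have "x \<otimes> c \<otimes> inv x \<in> D"
      using normal.inv_op_closed2[OF derived_self_is_normal x] c_in unfolding D_def .
    moreover have "x \<otimes> c \<otimes> inv x \<noteq> \<one>"
      using x c_closed c_neq_one by (metis m_closed right_cancel inv_closed inv_inv l_cancel_one l_inv)
    ultimately have "x \<otimes> c \<otimes> inv x = c"
      using D by blast
    then show ?thesis
      using x c_closed by (metis inv_solve_right m_closed)
  qed
  have "x \<otimes> y = y \<otimes> x \<or> x \<otimes> y = c \<otimes> (y \<otimes> x)" if xy: "x \<in> carrier G" "y \<in> carrier G" for x y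
  proof -
    have "x \<otimes> y \<otimes> inv x \<otimes> inv y \<in> derived_set G (carrier G)"
      using xy by blast
    then have "x \<otimes> y \<otimes> inv x \<otimes> inv y \<in> D"
      unfolding D_def derived_def by (rule generate.incl)
    then have "x \<otimes> y \<otimes> inv x \<otimes> inv y = \<one> \<or> x \<otimes> y \<otimes> inv x \<otimes> inv y = c"
      using D by blast
    then show ?thesis
      using mult_eq_of_commutator_eq[OF xy] xy by fastforce
  qed
  with c_closed c_neq_one c_mult_self c_central show ?thesis
    by (intro that) unfold_locales
qed

theorem lemma3p9:
  fixes G (structure)
  assumes "group G" and "finite (carrier G)"
    and "card (derived G (carrier G)) = 2"
  shows
    "(\<forall>g \<in> carrier G.
        seq_equiv G {#g#} (replicate_mset (group.ord G g + 1) g)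
      \<and> seq_equiv G (replicate_mset (group.ord G g) g + replicate_mset (group.ord G g) g)
                    (replicate_mset (group.ord G g) g))
   \<and> (\<forall>g \<in> carrier G. \<forall>k::nat. 1 \<le> k \<and> k \<le> group.ord G g \<and> odd k \<and> g [^] k \<notin> center G
        \<longrightarrow> seq_equiv G (replicate_mset k g) {#g [^] k#})
   \<and> (\<forall>g \<in> carrier G - center G. \<forall>h \<in> carrier G - center G.
        g \<otimes> h = h \<otimes> g \<and>
        (g \<otimes> h \<in> center G \<or>
         (\<exists>g0 \<in> carrier G. g0 \<otimes> g \<noteq> g \<otimes> g0 \<and> g0 \<otimes> h \<noteq> h \<otimes> g0))
        \<longrightarrow> \<not> seq_equiv G {#g, h#} {#g \<otimes> h#})"
proof -
  interpret group G by fact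
  obtain c where "central_commutator_group G c"
    using central_commutator_group_of_card_derived_2[OF assms(3)] .
  then interpret central_commutator_group G c .
  text \<open>Part (2) only needs \<open>k\<close> to be odd, and part (3) does not need \<open>gh = hg\<close>.\<close>
  show ?thesis
  proof (intro conjI ballI allI impI)
    fix g
    assume "g \<in> carrier G"
    then show "seq_equiv G {#g#} (replicate_mset (ord g + 1) g)"
      and "seq_equiv G (replicate_mset (ord g) g + replicate_mset (ord g) g) (replicate_mset (ord g) g)"
      using seq_equiv_single_replicate_Suc_ord seq_equiv_replicate_ord_idem assms(2) by blast+
  next
    fix g and k :: nat
    assume "g \<in> carrier G" "1 \<le> k \<and> k \<le> ord g \<and> odd k \<and> g [^] k \<notin> center G"
    then show "seq_equiv G (replicate_mset k g) {#g [^] k#}"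
      using seq_equiv_replicate_odd_single by blast
  next
    fix g h
    assume g: "g \<in> carrier G - center G" and h: "h \<in> carrier G - center G"
      and "g \<otimes> h = h \<otimes> g \<and> (g \<otimes> h \<in> center G \<or>
        (\<exists>g0 \<in> carrier G. g0 \<otimes> g \<noteq> g \<otimes> g0 \<and> g0 \<otimes> h \<noteq> h \<otimes> g0))"
    then have "\<exists>g0 \<in> carrier G. g0 \<otimes> g \<noteq> g \<otimes> g0 \<and> g0 \<otimes> h \<noteq> h \<otimes> g0"
      using exists_not_commute_of_central_mult[OF g] by blast
    with g h show "\<not> seq_equiv G {#g, h#} {#g \<otimes> h#}"
      using not_seq_equiv_pair_single by blast
  qed
qed

end
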